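(* Let $\psi$ be the SC decoder and $\Psi$ the SSC decoder (with arbitrary, not necessarily ordered, index sets). Then $$\Pr\big(\psi(A\mathbf X,\mathbf Y)\neq\mathbf X\big)\le\frac{1}{2\log 2}\sum_{i\in\mathcal I_0}H(C_i\mid C_1^{i-1},\mathbf Y),$$ $$\Pr\big(\Psi(A\mathbf X,\mathbf Y)\neq\mathbf X\big)\le\frac{1}{\log 2}\sum_{i\in\mathcal I_0}H(C_i\mid C_1^{i-1},\mathbf Y),$$ where all logarithms (in $\log 2$ and in the entropies) are to base $|\mathcal X|$.
   Context: Setup: $\mathcal X,\mathcal Y$ finite, $|\mathcal X|\ge2$; $(\mathbf X,\mathbf Y)$ random on $\mathcal X^n\times\mathcal Y^n$; $A:\mathcal X^n\to\mathcal X^l$; $\{\mathcal I_0,\mathcal I_1\}$ a partition of $\{1,\dots,n\}$ with $|\mathcal I_1|=l$; $B:\mathcal X^n\to\mathcal X^{n-l}$ such that $T:\mathcal X^n\to\mathcal X^n$ is bijective, where $T(x)$ is the vector $c$ whose entries on $\mathcal I_1$ (increasing order) form $Ax$ and whose entries on $\mathcal I_0$ (increasing order) form $Bx$. Notation: $c_i^j=(c_i,\dots,c_j)$, $c_{\mathcal I_1}$ the subvector on $\mathcal I_1$. Extended codeword: $\mathbf C=(C_1,\dots,C_n)=T(\mathbf X)$. SC decoder: for $i\in\mathcal I_0$, $f_i(c_1^{i-1},y)\in\arg\max_{a}\mu_{C_i\mid C_1^{i-1}\mathbf Y}(a\mid c_1^{i-1},y)$ (ties/zero-probability conditions by a fixed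 rule). Given $(u,y)$, build $\hat c$ for $i=1,\dots,n$: $\hat c_{\mathcal I_1}=u$, and $\hat c_i=f_i(\hat c_1^{i-1},y)$ for $i\in\mathcal I_0$; $\psi(u,y)=T^{-1}(\hat c)$. SSC decoder: same recursion, except that for $i\in\mathcal I_0$, $\hat c_i$ is drawn at random according to $\mu_{C_i\mid C_1^{i-1}\mathbf Y}(\cdot\mid\hat c_1^{i-1},y)$ (fixed arbitrary distribution if the condition has probability zero); $\Psi(u,y)=T^{-1}(\hat c)$. *)

theory Defs
  imports "HOL-Probability.Probability"
begin

text \<open>Indices are 0-based: positions are 0..n-1. Vectors in X^n are lists of length n.\<close>

definition rank :: "nat set \<Rightarrow> nat \<Rightarrow> nat" where
  "rank I i = card {j \<in> I. j < i}"

definition extT :: "nat \<Rightarrow> nat set \<Rightarrow> ('a list \<Rightarrow> 'a list) \<Rightarrow> ('a list \<Rightarrow> 'a list)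
    \<Rightarrow> 'a list \<Rightarrow> 'a list" where
  "extT n I1 A B x =
     map (\<lambda>i. if i \<in> I1 then A x ! rank I1 i else B x ! rank ({0..<n} - I1) i) [0..<n]"

text \<open>Conditioning event {C_1^{i-1} = c, Y = y} for the joint law q of (C, Y).\<close>
definition cond_event :: "nat \<Rightarrow> 'a list \<Rightarrow> 'b list \<Rightarrow> ('a list \<times> 'b list) set" where
  "cond_event i c y = {(c', y'). take i c' = c \<and> y' = y}"

definition cond_pos :: "('a list \<times> 'b list) pmf \<Rightarrow> nat \<Rightarrow> 'a list \<Rightarrow> 'b list \<Rightarrow> bool" where
  "cond_pos q i c y \<longleftrightarrow> set_pmf q \<inter> cond_event i c y \<noteq> {}"

text \<open>mu_{C_i | C_1^{i-1} Y}( . | c, y) (meaningful when cond_pos q i c y).\<close>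
definition cond_C :: "('a list \<times> 'b list) pmf \<Rightarrow> nat \<Rightarrow> 'a list \<Rightarrow> 'b list \<Rightarrow> 'a pmf" where
  "cond_C q i c y = map_pmf (\<lambda>(c', y'). c' ! i) (cond_pmf q (cond_event i c y))"

fun sc_vec :: "nat set \<Rightarrow> (nat \<Rightarrow> 'a list \<Rightarrow> 'b list \<Rightarrow> 'a) \<Rightarrow> 'a list \<Rightarrow> 'b list
    \<Rightarrow> nat \<Rightarrow> 'a list" where
  "sc_vec I1 f u y 0 = []"
| "sc_vec I1 f u y (Suc i) =
     (let c = sc_vec I1 f u y i in c @ [if i \<in> I1 then u ! rank I1 i else f i c y])"

definition sc_decoder :: "nat \<Rightarrow> nat set \<Rightarrow> ('a list \<Rightarrow> 'a list) \<Rightarrow> ('a list \<Rightarrow> 'a list)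
    \<Rightarrow> (nat \<Rightarrow> 'a list \<Rightarrow> 'b list \<Rightarrow> 'a) \<Rightarrow> 'a list \<Rightarrow> 'b list \<Rightarrow> 'a list" where
  "sc_decoder n I1 A B f u y = inv_into {x. length x = n} (extT n I1 A B) (sc_vec I1 f u y n)"

text \<open>SSC recursion (random), with fallback distributions d for zero-probability conditions.\<close>
fun ssc_vec :: "('a list \<times> 'b list) pmf \<Rightarrow> nat set \<Rightarrow> (nat \<Rightarrow> 'a list \<Rightarrow> 'b list \<Rightarrow> 'a pmf)
    \<Rightarrow> 'a list \<Rightarrow> 'b list \<Rightarrow> nat \<Rightarrow> 'a list pmf" where
  "ssc_vec q I1 d u y 0 = return_pmf []"
| "ssc_vec q I1 d u y (Suc i) =
     bind_pmf (ssc_vec q I1 d u y i) (\<lambda>c.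
       if i \<in> I1 then return_pmf (c @ [u ! rank I1 i])
       else map_pmf (\<lambda>a. c @ [a]) (if cond_pos q i c y then cond_C q i c y else d i c y))"

definition ssc_decoder :: "nat \<Rightarrow> nat set \<Rightarrow> ('a list \<Rightarrow> 'a list) \<Rightarrow> ('a list \<Rightarrow> 'a list)
    \<Rightarrow> ('a list \<times> 'b list) pmf \<Rightarrow> (nat \<Rightarrow> 'a list \<Rightarrow> 'b list \<Rightarrow> 'a pmf)
    \<Rightarrow> 'a list \<Rightarrow> 'b list \<Rightarrow> 'a list pmf" where
  "ssc_decoder n I1 A B q d u y =
     map_pmf (inv_into {x. length x = n} (extT n I1 A B)) (ssc_vec q I1 d u y n)"

definition cond_entropy_pmf :: "real \<Rightarrow> ('u \<times> 'v) pmf \<Rightarrow> real" where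
  "cond_entropy_pmf b r =
     - (\<Sum>z\<in>set_pmf r. pmf r z * log b (pmf r z / pmf (map_pmf snd r) (snd z)))"

end

theory Submission
  imports Defs
begin

text \<open>Both decoders can only go wrong at a position i of I0 where the true prefix
  C_1^{i-1} has been reproduced, so a union bound over I0 reduces the claim to one position.
  There the SC decoder errs with the probability 1 - max_a \<mu>(a | C_1^{i-1}, Y) that the MAP
  guess misses, and 1 - max \<mu> \<le> H(\<mu>) / (2 ln 2) for every distribution \<mu>; the SSC decoder errs
  with expected probability E[1 - \<mu>(C_i | C_1^{i-1}, Y)], and 1 - x \<le> - log_2 x on (0, 1].\<close>

lemma neg_ln_ge_two_ln2_mult_one_minus:
  fixes x :: real
  assumes "0 < x" "x \<le> 1/2"
  shows "2 * ln 2 * (1 - x) \<le> - ln x"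
proof -
  have "ln (2 * x) \<le> 2 * x - 1" using assms by (intro ln_le_minus_one) simp
  moreover have "ln (2 * x) = ln 2 + ln x" using assms by (simp add: ln_mult)
  moreover have "0 \<le> (1 - ln 2) * (1 - 2 * x)"
    using assms ln_2_less_1 by (intro mult_nonneg_nonneg) auto
  ultimately show ?thesis by (simp add: algebra_simps)
qed

lemma neg_mult_ln_ge_ln2_mult_one_minus:
  fixes m :: real
  assumes "1/2 \<le> m" "m \<le> 1"
  shows "(1 - m) * ln 2 \<le> - (m * ln m)"
proof (cases "ln 2 \<le> m")
  case True
  have "m * ln m \<le> m * (m - 1)"
    using assms by (intro mult_left_mono ln_le_minus_one) auto
  moreover have "(1 - m) * ln 2 \<le> (1 - m) * m" using True assms by (intro mult_left_mono) auto
  ultimately show ?thesis by (simp add: algebra_simps)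
next
  case False
  \<comment> \<open>For m < ln 2 the tangent bound at 1 is too weak; use the tangent at 1/2 instead.\<close>
  have "m * ln (2 * m) \<le> m * (2 * m - 1)"
    using assms by (intro mult_left_mono ln_le_minus_one) auto
  moreover have "m * (2 * m - 1) \<le> ln 2 * (2 * m - 1)"
    using False assms by (intro mult_right_mono) auto
  moreover have "ln (2 * m) = ln 2 + ln m" using assms by (simp add: ln_mult)
  ultimately show ?thesis by (simp add: algebra_simps)
qed

lemma one_minus_le_neg_ln_div_ln2:
  fixes x :: real
  assumes "0 < x" "x \<le> 1"
  shows "1 - x \<le> - ln x / ln 2"
proof -
  have "1 - x \<le> - ln x" using ln_le_minus_one[OF assms(1)] by simp
  also have "- ln x \<le> - ln x / ln 2"
  proof -
    have "- ln x * ln 2 \<le> - ln x"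
      using assms ln_2_less_1 by (intro mult_right_le_one_le) auto
    thus ?thesis by (simp add: divide_le_eq)
  qed
  finally show ?thesis .
qed

lemma one_minus_mode_le_entropy:
  fixes \<mu> :: "'a::finite \<Rightarrow> real"
  assumes nonneg: "\<And>a. 0 \<le> \<mu> a" and total: "(\<Sum>a\<in>UNIV. \<mu> a) = 1"
    and mode: "\<And>a. \<mu> a \<le> \<mu> g"
  shows "2 * ln 2 * (1 - \<mu> g) \<le> (\<Sum>a\<in>UNIV. \<mu> a * - ln (\<mu> a))"
proof (cases "\<mu> g \<le> 1/2")
  case True
  have "0 < \<mu> g"
  proof (rule ccontr)
    assume "\<not> 0 < \<mu> g"
    hence "(\<Sum>a\<in>UNIV. \<mu> a) \<le> 0" using mode by (intro sum_nonpos) (meson not_le order_trans)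
    thus False using total by simp
  qed
  hence bound: "2 * ln 2 * (1 - \<mu> g) \<le> - ln (\<mu> g)"
    using True by (rule neg_ln_ge_two_ln2_mult_one_minus)
  have "\<mu> a * (2 * ln 2 * (1 - \<mu> g)) \<le> \<mu> a * - ln (\<mu> a)" for a
  proof (cases "\<mu> a = 0")
    case False
    hence "0 < \<mu> a" using nonneg[of a] by simp
    hence "- ln (\<mu> g) \<le> - ln (\<mu> a)" using mode[of a] by simp
    thus ?thesis using bound nonneg[of a] by (intro mult_left_mono) auto
  qed simp
  hence "(\<Sum>a\<in>UNIV. \<mu> a * (2 * ln 2 * (1 - \<mu> g))) \<le> (\<Sum>a\<in>UNIV. \<mu> a * - ln (\<mu> a))"
    by (intro sum_mono)
  thus ?thesis by (simp add: sum_distrib_right[symmetric] total)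
next
  case False
  \<comment> \<open>A dominant mode: every other atom has mass at most 1 - \<mu> g < 1/2, hence - ln (\<mu> a) \<ge> ln 2.\<close>
  have rest: "(\<Sum>a\<in>UNIV - {g}. \<mu> a) = 1 - \<mu> g"
    using total sum.remove[of UNIV g \<mu>] by simp
  have atom: "\<mu> a * ln 2 \<le> \<mu> a * - ln (\<mu> a)" if "a \<in> UNIV - {g}" for a
  proof (cases "\<mu> a = 0")
    case False
    hence pos: "0 < \<mu> a" using nonneg[of a] by simp
    have "\<mu> a \<le> (\<Sum>a\<in>UNIV - {g}. \<mu> a)"
      using that by (intro member_le_sum) (auto simp: nonneg)
    hence "\<mu> a \<le> 1/2" using rest \<open>\<not> \<mu> g \<le> 1/2\<close> by simp
    hence "ln 2 \<le> ln (1 / \<mu> a)" using pos by (subst ln_le_cancel_iff) (auto simp: field_simps)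
    hence "ln 2 \<le> - ln (\<mu> a)" using pos by (simp add: ln_div)
    thus ?thesis using pos by (intro mult_left_mono) auto
  qed simp
  have "(\<Sum>a\<in>UNIV - {g}. \<mu> a * ln 2) \<le> (\<Sum>a\<in>UNIV - {g}. \<mu> a * - ln (\<mu> a))"
    by (rule sum_mono) (rule atom)
  hence "(1 - \<mu> g) * ln 2 \<le> (\<Sum>a\<in>UNIV - {g}. \<mu> a * - ln (\<mu> a))"
    by (simp add: sum_distrib_right[symmetric] rest)
  moreover have "(1 - \<mu> g) * ln 2 \<le> \<mu> g * - ln (\<mu> g)"
    using neg_mult_ln_ge_ln2_mult_one_minus[of "\<mu> g"] False rest
      sum_nonneg[of "UNIV - {g}" \<mu>] nonneg by simp
  moreover have "(\<Sum>a\<in>UNIV. \<mu> a * - ln (\<mu> a))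
      = \<mu> g * - ln (\<mu> g) + (\<Sum>a\<in>UNIV - {g}. \<mu> a * - ln (\<mu> a))"
    by (rule sum.remove) auto
  ultimately show ?thesis by (simp add: algebra_simps)
qed

lemma pmf_map_snd_eq_sum:
  fixes r :: "('a::finite \<times> 'c) pmf"
  shows "pmf (map_pmf snd r) s = (\<Sum>a\<in>UNIV. pmf r (a, s))"
proof -
  have "snd -` {s} = (\<lambda>a. (a, s)) ` (UNIV :: 'a set)" by auto
  hence "pmf (map_pmf snd r) s = sum (pmf r) ((\<lambda>a. (a, s)) ` UNIV)"
    by (simp add: pmf_map measure_measure_pmf_finite)
  also have "\<dots> = (\<Sum>a\<in>UNIV. pmf r (a, s))" by (subst sum.reindex) (auto simp: inj_on_def)
  finally show ?thesis .
qed

lemma sum_set_pmf_eq_sum_fibres: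
  fixes r :: "('a::finite \<times> 'c) pmf"
  assumes fin: "finite (set_pmf r)" and vanish: "\<And>z. z \<notin> set_pmf r \<Longrightarrow> F z = 0"
  shows "(\<Sum>z\<in>set_pmf r. F z) = (\<Sum>s\<in>set_pmf (map_pmf snd r). \<Sum>a\<in>UNIV. F (a, s))"
proof -
  have "(\<Sum>z\<in>set_pmf r. F z) = (\<Sum>z\<in>UNIV \<times> set_pmf (map_pmf snd r). F z)"
    using fin vanish by (intro sum.mono_neutral_left) force+
  also have "\<dots> = (\<Sum>a\<in>UNIV. \<Sum>s\<in>set_pmf (map_pmf snd r). F (a, s))"
    by (simp add: sum.cartesian_product)
  also have "\<dots> = (\<Sum>s\<in>set_pmf (map_pmf snd r). \<Sum>a\<in>UNIV. F (a, s))"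
    by (rule sum.swap)
  finally show ?thesis .
qed

lemma cond_entropy_pmf_eq_ln:
  "cond_entropy_pmf b r =
     (\<Sum>z\<in>set_pmf r. pmf r z * - ln (pmf r z / pmf (map_pmf snd r) (snd z))) / ln b"
  unfolding cond_entropy_pmf_def log_def by (simp add: sum_divide_distrib sum_negf)

lemma fibre_miss_le_entropy:
  fixes r :: "('a::finite \<times> 'c) pmf"
  assumes pos: "0 < pmf (map_pmf snd r) s" and mode: "\<And>a. pmf r (a, s) \<le> pmf r (g, s)"
  shows "pmf (map_pmf snd r) s - pmf r (g, s)
      \<le> 1 / (2 * ln 2) * (\<Sum>a\<in>UNIV. pmf r (a, s) * - ln (pmf r (a, s) / pmf (map_pmf snd r) s))"
proof -
  define \<sigma> where "\<sigma> = pmf (map_pmf snd r) s"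
  define \<mu> where "\<mu> a = pmf r (a, s) / \<sigma>" for a
  have "2 * ln 2 * (1 - \<mu> g) \<le> (\<Sum>a\<in>UNIV. \<mu> a * - ln (\<mu> a))"
  proof (rule one_minus_mode_le_entropy)
    show "(\<Sum>a\<in>UNIV. \<mu> a) = 1"
      using pos by (simp add: \<mu>_def \<sigma>_def sum_divide_distrib[symmetric] pmf_map_snd_eq_sum)
    show "\<mu> a \<le> \<mu> g" for a using pos mode[of a] by (simp add: \<mu>_def \<sigma>_def divide_right_mono)
  qed (use pos in \<open>simp add: \<mu>_def \<sigma>_def\<close>)
  hence "\<sigma> * (2 * ln 2 * (1 - \<mu> g)) \<le> \<sigma> * (\<Sum>a\<in>UNIV. \<mu> a * - ln (\<mu> a))"
    using pos by (simp add: \<sigma>_def)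
  moreover have "\<sigma> * (1 - \<mu> g) = \<sigma> - pmf r (g, s)" using pos by (simp add: \<mu>_def \<sigma>_def field_simps)
  moreover have "\<sigma> * (\<Sum>a\<in>UNIV. \<mu> a * - ln (\<mu> a))
      = (\<Sum>a\<in>UNIV. pmf r (a, s) * - ln (pmf r (a, s) / \<sigma>))"
    using pos by (simp add: sum_distrib_left \<mu>_def \<sigma>_def)
  ultimately show ?thesis by (simp add: \<sigma>_def field_simps)
qed

lemma map_guess_error_le_cond_entropy:
  fixes r :: "('a::finite \<times> 'c) pmf" and g :: "'c \<Rightarrow> 'a"
  assumes fin: "finite (set_pmf r)" and b: "1 < b"
    and mode: "\<And>s a. 0 < pmf (map_pmf snd r) s \<Longrightarrow> pmf r (a, s) \<le> pmf r (g s, s)"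
  shows "measure r {z. g (snd z) \<noteq> fst z} \<le> 1 / (2 * log b 2) * cond_entropy_pmf b r"
proof -
  define \<sigma> where "\<sigma> = pmf (map_pmf snd r)"
  have \<sigma>_pos: "0 < \<sigma> s" if "s \<in> set_pmf (map_pmf snd r)" for s
    using that by (simp add: \<sigma>_def pmf_positive)
  have "measure r {z. g (snd z) \<noteq> fst z} = measure r ({z. g (snd z) \<noteq> fst z} \<inter> set_pmf r)"
    by (simp add: measure_Int_set_pmf)
  also have "\<dots> = (\<Sum>z\<in>set_pmf r. pmf r z * of_bool (g (snd z) \<noteq> fst z))"
    using fin by (simp add: measure_measure_pmf_finite Int_commute sum.inter_restrict)
  also have "\<dots> = (\<Sum>s\<in>set_pmf (map_pmf snd r). \<sigma> s - pmf r (g s, s))"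
  proof -
    have "(\<Sum>a\<in>UNIV. pmf r (a, s) * of_bool (g s \<noteq> a)) = \<sigma> s - pmf r (g s, s)" for s
      by (simp add: \<sigma>_def pmf_map_snd_eq_sum sum.remove[of UNIV "g s"] of_bool_def if_distrib sum.If_cases)
        (rule sum.cong; auto)
    thus ?thesis by (subst sum_set_pmf_eq_sum_fibres[OF fin]) (auto simp: set_pmf_iff)
  qed
  also have "\<dots> \<le> (\<Sum>s\<in>set_pmf (map_pmf snd r).
      1 / (2 * ln 2) * (\<Sum>a\<in>UNIV. pmf r (a, s) * - ln (pmf r (a, s) / \<sigma> s)))"
    unfolding \<sigma>_def by (intro sum_mono fibre_miss_le_entropy mode) (auto simp: pmf_positive)
  also have "\<dots> = 1 / (2 * ln 2) * (\<Sum>z\<in>set_pmf r. pmf r z * - ln (pmf r z / \<sigma> (snd z)))"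
    by (subst sum_set_pmf_eq_sum_fibres[OF fin]) (auto simp: set_pmf_iff sum_distrib_left)
  also have "\<dots> = 1 / (2 * log b 2) * cond_entropy_pmf b r"
    using b by (simp add: cond_entropy_pmf_eq_ln \<sigma>_def log_def)
  finally show ?thesis .
qed

lemma expected_posterior_miss_le_cond_entropy:
  fixes r :: "('a::finite \<times> 'c) pmf"
  assumes fin: "finite (set_pmf r)" and b: "1 < b"
  shows "(\<integral>z. 1 - pmf r z / pmf (map_pmf snd r) (snd z) \<partial>r) \<le> 1 / log b 2 * cond_entropy_pmf b r"
proof -
  define \<sigma> where "\<sigma> = pmf (map_pmf snd r)"
  have "(\<integral>z. 1 - pmf r z / \<sigma> (snd z) \<partial>r) = (\<Sum>z\<in>set_pmf r. pmf r z * (1 - pmf r z / \<sigma> (snd z)))"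
    using fin by (simp add: integral_measure_pmf_real mult.commute)
  also have "\<dots> \<le> (\<Sum>z\<in>set_pmf r. pmf r z * (- ln (pmf r z / \<sigma> (snd z)) / ln 2))"
  proof (intro sum_mono mult_left_mono one_minus_le_neg_ln_div_ln2)
    fix z assume z: "z \<in> set_pmf r"
    have "pmf r z \<le> \<sigma> (snd z)"
      using member_le_sum[of "fst z" UNIV "\<lambda>a. pmf r (a, snd z)"]
      by (simp add: \<sigma>_def pmf_map_snd_eq_sum)
    moreover have "0 < pmf r z" using z by (simp add: pmf_positive)
    ultimately show "0 < pmf r z / \<sigma> (snd z)" "pmf r z / \<sigma> (snd z) \<le> 1" by simp_all
  qed simp
  also have "\<dots> = (\<Sum>z\<in>set_pmf r. pmf r z * - ln (pmf r z / \<sigma> (snd z))) / ln 2"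
    by (simp add: sum_divide_distrib)
  also have "\<dots> = 1 / log b 2 * cond_entropy_pmf b r"
    using b by (simp add: cond_entropy_pmf_eq_ln \<sigma>_def log_def)
  finally show ?thesis unfolding \<sigma>_def .
qed

lemma measure_bind_pmf_le_integral:
  fixes M :: "'x pmf" and K :: "'x \<Rightarrow> 'y pmf" and F :: "'x \<Rightarrow> real"
  assumes le: "\<And>x. x \<in> set_pmf M \<Longrightarrow> measure (K x) E \<le> F x" and int: "integrable M F"
  shows "measure (bind_pmf M K) E \<le> (\<integral>x. F x \<partial>M)"
proof -
  have F_nonneg: "AE x in M. 0 \<le> F x"
    by (rule AE_pmfI) (use le in \<open>meson measure_nonneg order_trans\<close>)
  have "emeasure (bind_pmf M K) E = (\<integral>\<^sup>+x. emeasure (K x) E \<partial>M)" by simp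
  also have "\<dots> \<le> (\<integral>\<^sup>+x. ennreal (F x) \<partial>M)"
    by (intro nn_integral_mono_AE AE_pmfI) (simp add: measure_pmf.emeasure_eq_measure le ennreal_leI)
  also have "\<dots> = ennreal (\<integral>x. F x \<partial>M)"
    by (rule nn_integral_eq_integral[OF int F_nonneg])
  finally show ?thesis
    using integral_nonneg_AE[OF F_nonneg] by (simp add: measure_pmf.emeasure_eq_measure ennreal_le_iff)
qed

lemma measure_bind_pmf_le_miss:
  "measure (bind_pmf M K) E \<le> measure M {x. x \<noteq> x0} + measure (K x0) E"
proof -
  define F where "F x = indicator {x. x \<noteq> x0} x + measure (K x0) E" for x
  have int_ind: "integrable M (indicator {x. x \<noteq> x0} :: _ \<Rightarrow> real)"
    by (rule integrable_real_indicator) (auto simp: measure_pmf.emeasure_eq_measure)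
  have "measure (bind_pmf M K) E \<le> (\<integral>x. F x \<partial>M)"
  proof (rule measure_bind_pmf_le_integral)
    fix x
    show "measure (K x) E \<le> F x"
      by (cases "x = x0") (auto simp: F_def intro!: add_increasing2)
    show "integrable M F" unfolding F_def by (intro Bochner_Integration.integrable_add int_ind) simp
  qed
  also have "\<dots> = measure M {x. x \<noteq> x0} + measure (K x0) E"
    unfolding F_def
    by (subst Bochner_Integration.integral_add[OF int_ind]) (auto simp: measure_pmf.emeasure_eq_measure)
  finally show ?thesis .
qed

definition prefix_joint :: "('a list \<times> 'b list) pmf \<Rightarrow> nat \<Rightarrow> ('a \<times> 'a list \<times> 'b list) pmf" where
  "prefix_joint q i = map_pmf (\<lambda>(c, y). (c ! i, (take i c, y))) q"

lemma pmf_map_snd_prefix_joint: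
  "pmf (map_pmf snd (prefix_joint q i)) (c, y) = measure q (cond_event i c y)"
proof -
  have "map_pmf snd (prefix_joint q i) = map_pmf (\<lambda>(c', y'). (take i c', y')) q"
    by (simp add: prefix_joint_def pmf.map_comp o_def case_prod_unfold)
  moreover have "(\<lambda>(c', y'). (take i c', y')) -` {(c, y)} = cond_event i c y"
    by (auto simp: cond_event_def)
  ultimately show ?thesis by (simp add: pmf_map)
qed

lemma cond_pos_iff_prefix_marginal_pos:
  "cond_pos q i c y \<longleftrightarrow> 0 < pmf (map_pmf snd (prefix_joint q i)) (c, y)"
  unfolding pmf_map_snd_prefix_joint cond_pos_def
  by (metis measure_pmf_zero_iff measure_nonneg less_le)

lemma cond_pos_take:
  "(c, y) \<in> set_pmf q \<Longrightarrow> cond_pos q i (take i c) y"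
  by (auto simp: cond_pos_def cond_event_def)

lemma pmf_cond_C:
  assumes "cond_pos q i c y"
  shows "pmf (cond_C q i c y) a =
    pmf (prefix_joint q i) (a, (c, y)) / pmf (map_pmf snd (prefix_joint q i)) (c, y)"
proof -
  define E where "E = cond_event i c y"
  have E: "set_pmf q \<inter> E \<noteq> {}" using assms by (simp add: cond_pos_def E_def)
  have "pmf (cond_C q i c y) a = measure (cond_pmf q E) ((\<lambda>(c', y'). c' ! i) -` {a})"
    by (simp add: cond_C_def E_def pmf_map)
  also have "\<dots> = measure q (E \<inter> ((\<lambda>(c', y'). c' ! i) -` {a})) / measure q E"
    using emeasure_measure_pmf_not_zero[OF E]
    by (simp add: cond_pmf.rep_eq[OF E] measure_pmf.emeasure_eq_measure)
  also have "E \<inter> ((\<lambda>(c', y'). c' ! i) -` {a}) = (\<lambda>(c', y'). (c' ! i, (take i c', y'))) -` {(a, (c, y))}"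
    by (auto simp: E_def cond_event_def)
  finally show ?thesis unfolding pmf_map_snd_prefix_joint by (simp add: E_def prefix_joint_def pmf_map)
qed

lemma decision_error_le_cond_entropy:
  fixes q :: "('a::finite list \<times> 'b list) pmf"
  assumes fin: "finite (set_pmf q)" and b: "1 < b"
    and mode: "\<And>c y a. cond_pos q i c y \<Longrightarrow> pmf (cond_C q i c y) a \<le> pmf (cond_C q i c y) (f c y)"
  shows "measure q {(c, y). f (take i c) y \<noteq> c ! i}
      \<le> 1 / (2 * log b 2) * cond_entropy_pmf b (prefix_joint q i)"
proof -
  have "measure q {(c, y). f (take i c) y \<noteq> c ! i}
      = measure (prefix_joint q i) {z. case_prod f (snd z) \<noteq> fst z}"
    by (simp add: prefix_joint_def case_prod_unfold)
  also have "\<dots> \<le> 1 / (2 * log b 2) * cond_entropy_pmf b (prefix_joint q i)"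
  proof (rule map_guess_error_le_cond_entropy)
    show "finite (set_pmf (prefix_joint q i))" using fin by (simp add: prefix_joint_def)
    fix s a
    assume pos: "0 < pmf (map_pmf snd (prefix_joint q i)) s"
    obtain c y where s: "s = (c, y)" by force
    have "cond_pos q i c y" using pos by (simp add: cond_pos_iff_prefix_marginal_pos s)
    from mode[OF this, of a] show "pmf (prefix_joint q i) (a, s) \<le> pmf (prefix_joint q i) (case_prod f s, s)"
      using pos by (simp add: pmf_cond_C[OF \<open>cond_pos q i c y\<close>] s divide_le_cancel)
  qed (use b in simp)
  finally show ?thesis .
qed

lemma expected_decision_miss_le_cond_entropy:
  fixes q :: "('a::finite list \<times> 'b list) pmf"
  assumes fin: "finite (set_pmf q)" and b: "1 < b"
  shows "(\<integral>(c, y). 1 - pmf (cond_C q i (take i c) y) (c ! i) \<partial>q)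
      \<le> 1 / log b 2 * cond_entropy_pmf b (prefix_joint q i)"
proof -
  let ?r = "prefix_joint q i"
  have "(\<integral>(c, y). 1 - pmf (cond_C q i (take i c) y) (c ! i) \<partial>q)
      = (\<integral>z. 1 - pmf ?r z / pmf (map_pmf snd ?r) (snd z) \<partial>?r)"
    unfolding prefix_joint_def integral_map_pmf
    by (intro integral_cong_AE AE_pmfI)
      (auto simp: pmf_cond_C cond_pos_take prefix_joint_def)
  also have "\<dots> \<le> 1 / log b 2 * cond_entropy_pmf b ?r"
    using fin b by (intro expected_posterior_miss_le_cond_entropy) (simp_all add: prefix_joint_def)
  finally show ?thesis .
qed

lemma length_extT [simp]: "length (extT n I1 A B x) = n"
  by (simp add: extT_def)

lemma nth_extT:
  "i < n \<Longrightarrow> extT n I1 A B x ! i = (if i \<in> I1 then A x ! rank I1 i else B x ! rank ({0..<n} - I1) i)"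
  by (simp add: extT_def)

lemma sc_vec_eq_take:
  assumes "k \<le> length c"
    and frozen: "\<And>i. i < k \<Longrightarrow> i \<in> I1 \<Longrightarrow> u ! rank I1 i = c ! i"
    and decided: "\<And>i. i < k \<Longrightarrow> i \<notin> I1 \<Longrightarrow> f i (take i c) y = c ! i"
  shows "sc_vec I1 f u y k = take k c"
  using assms
proof (induction k)
  case (Suc k)
  hence "sc_vec I1 f u y k = take k c" by simp
  thus ?case using Suc.prems by (simp add: take_Suc_conv_app_nth Let_def)
qed simp

lemma sc_decoder_eq:
  assumes bij: "bij_betw (extT n I1 A B) {x. length x = n} {x. length x = n}" and "length x = n"
    and decided: "\<And>i. i < n \<Longrightarrow> i \<notin> I1 \<Longrightarrow>
      f i (take i (extT n I1 A B x)) y = extT n I1 A B x ! i"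
  shows "sc_decoder n I1 A B f (A x) y = x"
proof -
  have "sc_vec I1 f (A x) y n = extT n I1 A B x"
    using sc_vec_eq_take[of n "extT n I1 A B x" I1 "A x" f y] decided by (simp add: nth_extT)
  thus ?thesis using bij_betw_inv_into_left[OF bij] \<open>length x = n\<close> by (simp add: sc_decoder_def)
qed

lemma sc_decoder_error_le_sum:
  fixes p :: "('a list \<times> 'b list) pmf" and n :: nat and I1 :: "nat set" and A B :: "'a list \<Rightarrow> 'a list"
  defines "q \<equiv> map_pmf (\<lambda>(x, y). (extT n I1 A B x, y)) p"
  assumes len: "\<And>x y. (x, y) \<in> set_pmf p \<Longrightarrow> length x = n"
    and bij: "bij_betw (extT n I1 A B) {x. length x = n} {x. length x = n}"
  shows "measure p {(x, y). sc_decoder n I1 A B f (A x) y \<noteq> x}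
    \<le> (\<Sum>i\<in>{0..<n} - I1. measure q {(c, y). f i (take i c) y \<noteq> c ! i})"
proof -
  let ?miss = "\<lambda>i. {(c, y). f i (take i c) y \<noteq> c ! i}"
  have "measure p {(x, y). sc_decoder n I1 A B f (A x) y \<noteq> x}
      = measure p ({(x, y). sc_decoder n I1 A B f (A x) y \<noteq> x} \<inter> set_pmf p)"
    by (simp add: measure_Int_set_pmf)
  also have "\<dots> \<le> measure p (\<Union>i\<in>{0..<n} - I1. (\<lambda>(x, y). (extT n I1 A B x, y)) -` ?miss i)"
  proof (intro measure_pmf.finite_measure_mono subsetI, clarsimp)
    fix x y assume xy: "(x, y) \<in> set_pmf p" and wrong: "sc_decoder n I1 A B f (A x) y \<noteq> x"
    show "\<exists>i\<in>{0..<n} - I1. f i (take i (extT n I1 A B x)) y \<noteq> extT n I1 A B x ! i"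
    proof (rule ccontr)
      assume "\<not> ?thesis"
      hence "sc_decoder n I1 A B f (A x) y = x" by (intro sc_decoder_eq[OF bij len[OF xy]]) auto
      with wrong show False ..
    qed
  qed simp
  also have "\<dots> \<le> (\<Sum>i\<in>{0..<n} - I1. measure p ((\<lambda>(x, y). (extT n I1 A B x, y)) -` ?miss i))"
    by (rule measure_pmf.finite_measure_subadditive_finite) auto
  finally show ?thesis by (simp add: q_def)
qed

lemma ssc_vec_miss_le:
  assumes "k \<le> length c"
    and frozen: "\<And>i. i < k \<Longrightarrow> i \<in> I1 \<Longrightarrow> u ! rank I1 i = c ! i"
    and pos: "\<And>i. i < k \<Longrightarrow> i \<notin> I1 \<Longrightarrow> cond_pos q i (take i c) y"
  shows "measure (ssc_vec q I1 d u y k) {c'. c' \<noteq> take k c}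
    \<le> (\<Sum>i\<in>{..<k} - I1. 1 - pmf (cond_C q i (take i c) y) (c ! i))"
  using assms
proof (induction k)
  case (Suc k)
  let ?miss = "\<lambda>i. 1 - pmf (cond_C q i (take i c) y) (c ! i)"
  have take_Suc: "take (Suc k) c = take k c @ [c ! k]"
    using Suc.prems by (simp add: take_Suc_conv_app_nth)
  define step where "step c' = (if k \<in> I1 then return_pmf (c' @ [u ! rank I1 k])
      else map_pmf (\<lambda>a. c' @ [a]) (if cond_pos q k c' y then cond_C q k c' y else d k c' y))" for c'
  \<comment> \<open>A wrong prefix is charged in full; the correct prefix only by the chance of a wrong next symbol.\<close>
  have "measure (ssc_vec q I1 d u y (Suc k)) {c'. c' \<noteq> take (Suc k) c}
      \<le> measure (ssc_vec q I1 d u y k) {c'. c' \<noteq> take k c}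
        + measure (step (take k c)) {c'. c' \<noteq> take (Suc k) c}"
    unfolding ssc_vec.simps step_def by (rule measure_bind_pmf_le_miss)
  also have "\<dots> \<le> (\<Sum>i\<in>{..<Suc k} - I1. ?miss i)"
  proof (cases "k \<in> I1")
    case True
    have "measure (step (take k c)) {c'. c' \<noteq> take (Suc k) c} = 0"
      using True Suc.prems by (simp add: step_def take_Suc)
    moreover have "{..<Suc k} - I1 = {..<k} - I1" using True by (auto simp: less_Suc_eq)
    ultimately show ?thesis using Suc by simp
  next
    case False
    have "measure (step (take k c)) {c'. c' \<noteq> take (Suc k) c}
        = measure (cond_C q k (take k c) y) (UNIV - {c ! k})"
      using False Suc.prems by (simp add: step_def take_Suc set_diff_eq)
    also have "\<dots> = ?miss k"
      by (simp add: measure_pmf.finite_measure_Diff measure_pmf_single)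
    finally have "measure (step (take k c)) {c'. c' \<noteq> take (Suc k) c} = ?miss k" .
    moreover have "{..<Suc k} - I1 = insert k ({..<k} - I1)" using False by auto
    ultimately show ?thesis using Suc by simp
  qed
  finally show ?case .
qed simp

lemma ssc_decoder_miss_le:
  assumes bij: "bij_betw (extT n I1 A B) {x. length x = n} {x. length x = n}" and "length x = n"
    and pos: "\<And>i. i < n \<Longrightarrow> i \<notin> I1 \<Longrightarrow> cond_pos q i (take i (extT n I1 A B x)) y"
  shows "measure (ssc_decoder n I1 A B q d (A x) y) {x'. x' \<noteq> x}
    \<le> (\<Sum>i\<in>{0..<n} - I1. 1 - pmf (cond_C q i (take i (extT n I1 A B x)) y) (extT n I1 A B x ! i))"
proof -
  have "measure (ssc_decoder n I1 A B q d (A x) y) {x'. x' \<noteq> x}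
      \<le> measure (ssc_vec q I1 d (A x) y n) {c. c \<noteq> take n (extT n I1 A B x)}"
    using bij_betw_inv_into_left[OF bij] \<open>length x = n\<close>
    by (auto simp: ssc_decoder_def intro!: measure_pmf.finite_measure_mono)
  also have "\<dots> \<le> (\<Sum>i\<in>{..<n} - I1. 1 - pmf (cond_C q i (take i (extT n I1 A B x)) y) (extT n I1 A B x ! i))"
    using pos by (intro ssc_vec_miss_le) (auto simp: nth_extT)
  finally show ?thesis by (simp add: atLeast0LessThan)
qed

lemma ssc_decoder_error_le_sum:
  fixes p :: "('a list \<times> 'b list) pmf" and n :: nat and I1 :: "nat set" and A B :: "'a list \<Rightarrow> 'a list"
  defines "q \<equiv> map_pmf (\<lambda>(x, y). (extT n I1 A B x, y)) p"
  assumes fin: "finite (set_pmf p)" and len: "\<And>x y. (x, y) \<in> set_pmf p \<Longrightarrow> length x = n"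
    and bij: "bij_betw (extT n I1 A B) {x. length x = n} {x. length x = n}"
  shows "measure (bind_pmf p (\<lambda>(x, y). map_pmf (\<lambda>x'. (x', x)) (ssc_decoder n I1 A B q d (A x) y)))
      {(x', x). x' \<noteq> x}
    \<le> (\<Sum>i\<in>{0..<n} - I1. \<integral>(c, y). 1 - pmf (cond_C q i (take i c) y) (c ! i) \<partial>q)"
proof -
  let ?miss = "\<lambda>i x y. 1 - pmf (cond_C q i (take i (extT n I1 A B x)) y) (extT n I1 A B x ! i)"
  have int: "integrable p g" for g :: "_ \<Rightarrow> real" by (rule integrable_measure_pmf_finite[OF fin])
  have "measure (bind_pmf p (\<lambda>(x, y). map_pmf (\<lambda>x'. (x', x)) (ssc_decoder n I1 A B q d (A x) y)))
      {(x', x). x' \<noteq> x} \<le> (\<integral>(x, y). (\<Sum>i\<in>{0..<n} - I1. ?miss i x y) \<partial>p)"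
    using len by (intro measure_bind_pmf_le_integral int)
      (auto simp: vimage_def q_def intro!: ssc_decoder_miss_le[OF bij] cond_pos_take rev_image_eqI)
  also have "\<dots> = (\<Sum>i\<in>{0..<n} - I1. \<integral>(x, y). ?miss i x y \<partial>p)"
    by (simp add: case_prod_unfold Bochner_Integration.integral_sum int)
  finally show ?thesis by (simp add: q_def case_prod_unfold)
qed

theorem lemma4:
  fixes p :: "('a::finite list \<times> 'b::finite list) pmf"
    and n l :: nat and I1 :: "nat set"
    and A B :: "'a list \<Rightarrow> 'a list"
    and f :: "nat \<Rightarrow> 'a list \<Rightarrow> 'b list \<Rightarrow> 'a"
    and d :: "nat \<Rightarrow> 'a list \<Rightarrow> 'b list \<Rightarrow> 'a pmf"
  defines "T \<equiv> extT n I1 A B"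
  defines "q \<equiv> map_pmf (\<lambda>(x, y). (T x, y)) p"
  defines "I0 \<equiv> {0..<n} - I1"
  defines "b \<equiv> real CARD('a)"
  defines "H \<equiv> (\<lambda>i. cond_entropy_pmf b
             (map_pmf (\<lambda>(x, y). (T x ! i, (take i (T x), y))) p))"
  assumes "CARD('a) \<ge> 2"
    and "set_pmf p \<subseteq> {(x, y). length x = n \<and> length y = n}"
    and "I1 \<subseteq> {0..<n}" and "card I1 = l"
    and "\<forall>x. length x = n \<longrightarrow> length (A x) = l"
    and "\<forall>x. length x = n \<longrightarrow> length (B x) = n - l"
    and "bij_betw T {x. length x = n} {x. length x = n}"
    and "\<forall>i c y. i \<in> I0 \<longrightarrow> cond_pos q i c y \<longrightarrow>
           (\<forall>a. pmf (cond_C q i c y) a \<le> pmf (cond_C q i c y) (f i c y))"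
  shows "measure_pmf.prob p {(x, y). sc_decoder n I1 A B f (A x) y \<noteq> x}
           \<le> 1 / (2 * log b 2) * (\<Sum>i\<in>I0. H i)
       \<and> measure_pmf.prob
           (bind_pmf p (\<lambda>(x, y). map_pmf (\<lambda>x'. (x', x)) (ssc_decoder n I1 A B q d (A x) y)))
           {(x', x). x' \<noteq> x}
           \<le> 1 / log b 2 * (\<Sum>i\<in>I0. H i)"
proof -
  note card = assms(6) and supp = assms(7) and bij = assms(12) and mode = assms(13)
  have b: "1 < b" using card by (simp add: b_def)
  have len: "length x = n" if "(x, y) \<in> set_pmf p" for x y using that supp by auto
  have fin_p: "finite (set_pmf p)"
  proof (rule finite_subset)
    show "set_pmf p \<subseteq> {x. set x \<subseteq> UNIV \<and> length x = n} \<times> {y. set y \<subseteq> UNIV \<and> length y = n}"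
      using supp by auto
  qed (intro finite_cartesian_product finite_lists_length_eq; simp)
  have fin_q: "finite (set_pmf q)" using fin_p by (simp add: q_def)
  have H: "H i = cond_entropy_pmf b (prefix_joint q i)" for i
    by (simp add: H_def prefix_joint_def q_def pmf.map_comp o_def case_prod_unfold)
  have "measure p {(x, y). sc_decoder n I1 A B f (A x) y \<noteq> x}
      \<le> (\<Sum>i\<in>I0. measure q {(c, y). f i (take i c) y \<noteq> c ! i})"
    unfolding q_def I0_def T_def using len bij[unfolded T_def] by (rule sc_decoder_error_le_sum)
  also have "\<dots> \<le> (\<Sum>i\<in>I0. 1 / (2 * log b 2) * H i)"
    unfolding H using mode by (intro sum_mono decision_error_le_cond_entropy[OF fin_q b]) blast
  moreover have "measure (bind_pmf p (\<lambda>(x, y). map_pmf (\<lambda>x'. (x', x)) (ssc_decoder n I1 A B q d (A x) y)))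
      {(x', x). x' \<noteq> x} \<le> (\<Sum>i\<in>I0. \<integral>(c, y). 1 - pmf (cond_C q i (take i c) y) (c ! i) \<partial>q)"
    unfolding q_def I0_def T_def using fin_p len bij[unfolded T_def] by (rule ssc_decoder_error_le_sum)
  moreover have "\<dots> \<le> (\<Sum>i\<in>I0. 1 / log b 2 * H i)"
    unfolding H by (intro sum_mono expected_decision_miss_le_cond_entropy[OF fin_q b])
  ultimately show ?thesis by (simp add: sum_distrib_left)
qed

end
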